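(* If $H$ is a corona graph, then its 2-subdivision graph $S_2(H)$ (for any function $\alpha$) is a minimal DPDP-graph. In particular, $S_2(F\circ K_1)$ is a minimal DPDP-graph for every graph $F$.
   Context: Graphs are finite and may have multiple edges and loops. A leaf is a vertex of degree one. The corona $F\circ K_1$ of a graph $F$ is obtained from $F$ by adding a pendant edge (to a new leaf) at each vertex of $F$. A corona graph is a graph obtained from a graph $F$ by attaching at least one pendant edge to each vertex of $F$. A set $D\subseteq V(G)$ is dominating if every vertex outside $D$ has a neighbor in $D$; $P$ is paired-dominating if it is dominating and the subgraph induced by $P$ has a perfect matching. A DPDP-graph is a graph $G$ admitting disjoint sets $D,P$ with $V(G)=D\cup P$, $D$ dominating and $P$ paired-dominating; a minimal DPDP-graph is a DPDP-graph no proper spanning subgraph of which is a DPDP-graph. 2-subdivision graph: for a graph $H$ with no isolated vertex, set of leaves $L_H$, and $\alpha:L_H\to\mathbb{N}=\{1,2,\dots\}$, $S_2(H)$ has vertex set $(V_H\setminus L_H)\cup\{(v,i): v\in L_H, 1\le i\le \alpha(v)\}$ together with two new vertices for each edge $e$ of $H$ ($u_e,v_e$ if $e$ joins $u\ne v$; $v_e^1,v_e^2$ if $e$ is a loop at $v$). Its edges are: the edge joining the two new vertices of each $e$; for $v\in V_H\setminus L_H$, $vv_e$ for each non-loop edge $e$ at $v$ and $vv_e^1,vv_e^2$ for each loop $e$ at $v$; for $v\in L_H$ with incident edge $e$, the edges $v_e(v,i)$, $1\le i\le\alpha(v)$. *)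

theory Defs
  imports Main
begin

text \<open>Finite multigraphs with loops: each edge has a set of ends of size 1 (loop) or 2.\<close>

record ('v,'e) mgraph =
  verts :: "'v set"
  arcs  :: "'e set"
  ends  :: "'e \<Rightarrow> 'v set"

definition wf_graph :: "('v,'e) mgraph \<Rightarrow> bool" where
  "wf_graph G \<longleftrightarrow> finite (verts G) \<and> finite (arcs G) \<and>
     (\<forall>e\<in>arcs G. ends G e \<subseteq> verts G \<and> (card (ends G e) = 1 \<or> card (ends G e) = 2))"

definition degree :: "('v,'e) mgraph \<Rightarrow> 'v \<Rightarrow> nat" where
  "degree G v = card {e\<in>arcs G. v \<in> ends G e \<and> card (ends G e) = 2}
              + 2 * card {e\<in>arcs G. ends G e = {v}}"

definition leaves :: "('v,'e) mgraph \<Rightarrow> 'v set" where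
  "leaves G = {v\<in>verts G. degree G v = 1}"

definition adj :: "('v,'e) mgraph \<Rightarrow> 'v \<Rightarrow> 'v \<Rightarrow> bool" where
  "adj G u v \<longleftrightarrow> u \<noteq> v \<and> (\<exists>e\<in>arcs G. ends G e = {u, v})"

definition dominating :: "('v,'e) mgraph \<Rightarrow> 'v set \<Rightarrow> bool" where
  "dominating G D \<longleftrightarrow> D \<subseteq> verts G \<and> (\<forall>v\<in>verts G - D. \<exists>u\<in>D. adj G u v)"

definition has_perfect_matching_on :: "('v,'e) mgraph \<Rightarrow> 'v set \<Rightarrow> bool" where
  "has_perfect_matching_on G P \<longleftrightarrow> (\<exists>M \<subseteq> arcs G.
      (\<forall>e\<in>M. card (ends G e) = 2 \<and> ends G e \<subseteq> P) \<and>
      (\<forall>e\<in>M. \<forall>f\<in>M. e \<noteq> f \<longrightarrow> ends G e \<inter> ends G f = {}) \<and>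
      (\<forall>v\<in>P. \<exists>e\<in>M. v \<in> ends G e))"

definition paired_dominating :: "('v,'e) mgraph \<Rightarrow> 'v set \<Rightarrow> bool" where
  "paired_dominating G P \<longleftrightarrow> dominating G P \<and> has_perfect_matching_on G P"

definition dpdp_graph :: "('v,'e) mgraph \<Rightarrow> bool" where
  "dpdp_graph G \<longleftrightarrow> (\<exists>D P. D \<inter> P = {} \<and> verts G = D \<union> P \<and>
       dominating G D \<and> paired_dominating G P)"

definition minimal_dpdp_graph :: "('v,'e) mgraph \<Rightarrow> bool" where
  "minimal_dpdp_graph G \<longleftrightarrow> dpdp_graph G \<and>
     (\<forall>E'. E' \<subset> arcs G \<longrightarrow> \<not> dpdp_graph (G\<lparr>arcs := E'\<rparr>))"

text \<open>Corona graph: obtained from a graph F (on vertex set F) by attaching at least one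
  pendant edge to each vertex of F.\<close>
definition corona_graph :: "('v,'e) mgraph \<Rightarrow> bool" where
  "corona_graph H \<longleftrightarrow> wf_graph H \<and> (\<exists>F \<subseteq> verts H.
      (\<forall>v\<in>verts H - F. degree H v = 1 \<and> (\<exists>u\<in>F. adj H u v)) \<and>
      (\<forall>u\<in>F. \<exists>v\<in>verts H - F. adj H u v))"

definition corona_K1 :: "('v,'e) mgraph \<Rightarrow> ('v + 'v, 'e + 'v) mgraph" where
  "corona_K1 F = \<lparr> verts = Inl ` verts F \<union> Inr ` verts F,
                   arcs = Inl ` arcs F \<union> Inr ` verts F,
                   ends = (\<lambda>x. case x of Inl e \<Rightarrow> Inl ` ends F e
                                        | Inr v \<Rightarrow> {Inl v, Inr v}) \<rparr>"

text \<open>Vertices of the 2-subdivision graph: original non-leaf vertices, copies (v,i) of leaves,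
  the new vertices u_e of non-loop edges, and the new vertices v_e^1, v_e^2 of loops.\<close>
datatype ('v,'e) s2v = SV 'v | SL 'v nat | SE 'e 'v | SLp 'e nat

definition S2 :: "('v,'e) mgraph \<Rightarrow> ('v \<Rightarrow> nat) \<Rightarrow> (('v,'e) s2v, ('v,'e) s2v set) mgraph" where
  "S2 H \<alpha> = (let L = leaves H;
                 NL = {e\<in>arcs H. card (ends H e) = 2};
                 LP = {e\<in>arcs H. card (ends H e) = 1}
   in \<lparr> verts = SV ` (verts H - L)
              \<union> {SL v i | v i. v \<in> L \<and> 1 \<le> i \<and> i \<le> \<alpha> v}
              \<union> {SE e u | e u. e \<in> NL \<and> u \<in> ends H e}
              \<union> {SLp e i | e i. e \<in> LP \<and> (i = 1 \<or> i = 2)},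
        arcs = {SE e ` ends H e | e. e \<in> NL}
             \<union> {{SLp e 1, SLp e 2} | e. e \<in> LP}
             \<union> {{SV v, SE e v} | v e. v \<in> verts H - L \<and> e \<in> NL \<and> v \<in> ends H e}
             \<union> {{SV v, SLp e i} | v e i. v \<in> verts H - L \<and> e \<in> LP \<and> ends H e = {v}
                                        \<and> (i = 1 \<or> i = 2)}
             \<union> {{SE e v, SL v i} | v e i. v \<in> L \<and> e \<in> arcs H \<and> v \<in> ends H e
                                        \<and> 1 \<le> i \<and> i \<le> \<alpha> v},
        ends = id \<rparr>)"

end

theory Submission
  imports Defs
begin

text \<open>
  In \<open>S\<^sub>2(H)\<close> take for \<open>D\<close> the non-leaf vertices of \<open>H\<close> together with the copies of
  the leaves, and for \<open>P\<close> the two new vertices of every edge; the edges joining these pairs form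
  a perfect matching of \<open>P\<close>. Conversely, let \<open>(D, P)\<close> be such a partition of a spanning
  subgraph. A vertex whose only neighbour is \<open>s\<close> must lie in \<open>D\<close>, with \<open>s \<in> P\<close>; applied to
  the leaf copies, and propagated along the pendant edges that a corona graph has at each
  non-leaf vertex, this forces \<open>D\<close> and \<open>P\<close> to be exactly the two sets above. Then no edge
  can be missing: each is the matching edge of a vertex of \<open>P\<close>, the only edge from a vertex
  of \<open>P\<close> into \<open>D\<close>, or the only edge at a leaf copy.
\<close>

definition dpdp_partition :: "('v,'e) mgraph \<Rightarrow> 'v set \<Rightarrow> 'v set \<Rightarrow> bool" where
  "dpdp_partition G D P \<longleftrightarrow>
     D \<inter> P = {} \<and> verts G = D \<union> P \<and> dominating G D \<and> paired_dominating G P"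

lemma dpdp_graph_iff_partition: "dpdp_graph G \<longleftrightarrow> (\<exists>D P. dpdp_partition G D P)"
  by (simp add: dpdp_graph_def dpdp_partition_def)

lemma adj_if_ends_id: "ends G = id \<Longrightarrow> adj G u w \<longleftrightarrow> u \<noteq> w \<and> {u, w} \<in> arcs G"
  by (auto simp: adj_def)

lemma card_2_obtain_other:
  assumes "card S = 2" "w \<in> S"
  obtains u where "S = {u, w}" "u \<noteq> w"
  using assms by (metis card_2_iff insertE insert_commute singletonD)

lemma dpdp_partition_D_neighbour:
  assumes "dpdp_partition G D P" "w \<in> P"
  shows "\<exists>u\<in>D. adj G u w"
  using assms by (auto simp: dpdp_partition_def dominating_def)

lemma dpdp_partition_P_neighbour:
  assumes part: "dpdp_partition G D P" and w: "w \<in> verts G"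
  shows "\<exists>u\<in>P. adj G u w"
proof (cases "w \<in> P")
  case True
  obtain M where M: "M \<subseteq> arcs G" "\<forall>e\<in>M. card (ends G e) = 2 \<and> ends G e \<subseteq> P"
      "\<forall>v\<in>P. \<exists>e\<in>M. v \<in> ends G e"
    using part by (auto simp: dpdp_partition_def paired_dominating_def has_perfect_matching_on_def)
  then obtain e where e: "e \<in> M" "w \<in> ends G e" using True by blast
  then obtain u where "ends G e = {u, w}" "u \<noteq> w" using M by (meson card_2_obtain_other)
  moreover have "u \<in> P" using M e \<open>ends G e = {u, w}\<close> by blast
  ultimately show ?thesis using M e unfolding adj_def by blast
next
  case False
  then show ?thesis
    using part w by (auto simp: dpdp_partition_def paired_dominating_def dominating_def)
qed

lemma dpdp_partition_pendant:
  assumes part: "dpdp_partition G D P" and w: "w \<in> verts G"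
    and only: "\<And>u. adj G u w \<Longrightarrow> u = s"
  shows "w \<in> D" "s \<in> P"
proof -
  obtain p where "p \<in> P" "adj G p w" using dpdp_partition_P_neighbour[OF part w] by blast
  then show "s \<in> P" using only by blast
  show "w \<in> D"
  proof (rule ccontr)
    assume "w \<notin> D"
    then have "w \<in> P" using part w by (auto simp: dpdp_partition_def)
    then obtain d where "d \<in> D" "adj G d w" using dpdp_partition_D_neighbour[OF part] by blast
    then have "s \<in> D" using only by blast
    with \<open>s \<in> P\<close> part show False by (auto simp: dpdp_partition_def)
  qed
qed

lemma leaf_incident_arc:
  assumes wf: "wf_graph H" and l: "l \<in> leaves H"
  obtains f x where "{e\<in>arcs H. l \<in> ends H e} = {f}" "ends H f = {x, l}" "x \<noteq> l"
proof -
  have deg: "degree H l = 1" using l by (simp add: leaves_def)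
  then have "card {e\<in>arcs H. ends H e = {l}} = 0" unfolding degree_def by linarith
  then have no_loop: "{e\<in>arcs H. ends H e = {l}} = {}" using wf by (simp add: wf_graph_def)
  have "card {e\<in>arcs H. l \<in> ends H e \<and> card (ends H e) = 2} = 1"
    using deg no_loop unfolding degree_def by simp
  then obtain f where f: "{e\<in>arcs H. l \<in> ends H e \<and> card (ends H e) = 2} = {f}"
    by (rule card_1_singletonE)
  have "card (ends H e) = 2" if "e \<in> arcs H" "l \<in> ends H e" for e
  proof -
    have "card (ends H e) = 1 \<or> card (ends H e) = 2" using wf that by (auto simp: wf_graph_def)
    moreover have "card (ends H e) \<noteq> 1"
      using no_loop that by (auto simp: card_1_singleton_iff)
    ultimately show ?thesis by blast
  qed
  then have incident: "{e\<in>arcs H. l \<in> ends H e} = {f}" using f by blast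
  moreover have "l \<in> ends H f" "card (ends H f) = 2" using f by auto
  then obtain x where "ends H f = {x, l}" "x \<noteq> l" by (metis card_2_obtain_other)
  ultimately show ?thesis using that by blast
qed

lemma leaf_no_loop:
  assumes "wf_graph H" "l \<in> leaves H" "e \<in> arcs H"
  shows "ends H e \<noteq> {l}"
proof -
  obtain f x where f: "{e\<in>arcs H. l \<in> ends H e} = {f}" "ends H f = {x, l}" "x \<noteq> l"
    using leaf_incident_arc[OF assms(1,2)] .
  show ?thesis
  proof
    assume loop: "ends H e = {l}"
    then have "e = f" using assms(3) f by blast
    then show False using loop f by (simp add: doubleton_eq_iff)
  qed
qed

lemma corona_graph_leaf_neighbour:
  assumes c: "corona_graph H" and x: "x \<in> verts H" "x \<notin> leaves H"
  obtains l f where "l \<in> leaves H" "f \<in> arcs H" "ends H f = {x, l}" "x \<noteq> l"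
proof -
  obtain F where F: "\<forall>v\<in>verts H - F. degree H v = 1" "\<forall>u\<in>F. \<exists>v\<in>verts H - F. adj H u v"
    using c by (auto simp: corona_graph_def)
  have "x \<in> F" using F x by (auto simp: leaves_def)
  then obtain v where "v \<in> verts H - F" "adj H x v" using F by blast
  then show ?thesis using that F by (auto simp: adj_def leaves_def)
qed

section \<open>The 2-subdivision graph\<close>

definition S2_old_verts :: "('v,'e) mgraph \<Rightarrow> ('v \<Rightarrow> nat) \<Rightarrow> ('v,'e) s2v set" where
  "S2_old_verts H \<alpha> = SV ` (verts H - leaves H) \<union> {SL v i | v i. v \<in> leaves H \<and> 1 \<le> i \<and> i \<le> \<alpha> v}"

definition S2_new_verts :: "('v,'e) mgraph \<Rightarrow> ('v,'e) s2v set" where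
  "S2_new_verts H = {SE e u | e u. e \<in> arcs H \<and> card (ends H e) = 2 \<and> u \<in> ends H e}
                  \<union> {SLp e i | e i. e \<in> arcs H \<and> card (ends H e) = 1 \<and> (i = 1 \<or> i = 2)}"

definition S2_new_arcs :: "('v,'e) mgraph \<Rightarrow> ('v,'e) s2v set set" where
  "S2_new_arcs H = {SE e ` ends H e | e. e \<in> arcs H \<and> card (ends H e) = 2}
                 \<union> {{SLp e 1, SLp e 2} | e. e \<in> arcs H \<and> card (ends H e) = 1}"

lemma S2_ends: "ends (S2 H \<alpha>) = id"
  by (simp add: S2_def Let_def)

lemma S2_verts: "verts (S2 H \<alpha>) = S2_old_verts H \<alpha> \<union> S2_new_verts H"
  by (auto simp: S2_def Let_def S2_old_verts_def S2_new_verts_def)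

lemma S2_old_new_verts_disjoint: "S2_old_verts H \<alpha> \<inter> S2_new_verts H = {}"
  by (auto simp: S2_old_verts_def S2_new_verts_def)

lemma S2_arcs: "arcs (S2 H \<alpha>) = S2_new_arcs H
     \<union> {{SV v, SE e v} | v e. v \<in> verts H - leaves H \<and> e \<in> arcs H \<and> card (ends H e) = 2 \<and> v \<in> ends H e}
     \<union> {{SV v, SLp e i} | v e i. v \<in> verts H - leaves H \<and> e \<in> arcs H \<and> ends H e = {v} \<and> (i = 1 \<or> i = 2)}
     \<union> {{SE e v, SL v i} | v e i. v \<in> leaves H \<and> e \<in> arcs H \<and> v \<in> ends H e \<and> 1 \<le> i \<and> i \<le> \<alpha> v}"
proof -
  have "(card (ends H e) = Suc 0 \<and> ends H e = {v} \<and> P) \<longleftrightarrow> (ends H e = {v} \<and> P)" for e v P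
    by auto
  then show ?thesis by (simp add: S2_def Let_def S2_new_arcs_def)
qed

lemma S2_arcsI:
  "\<lbrakk>v \<in> verts H; v \<notin> leaves H; e \<in> arcs H; card (ends H e) = 2; v \<in> ends H e\<rbrakk>
     \<Longrightarrow> {SV v, SE e v} \<in> arcs (S2 H \<alpha>)"
  "\<lbrakk>v \<in> verts H; v \<notin> leaves H; e \<in> arcs H; ends H e = {v}; i = 1 \<or> i = 2\<rbrakk>
     \<Longrightarrow> {SV v, SLp e i} \<in> arcs (S2 H \<alpha>)"
  "\<lbrakk>v \<in> leaves H; e \<in> arcs H; v \<in> ends H e; 1 \<le> i; i \<le> \<alpha> v\<rbrakk>
     \<Longrightarrow> {SE e v, SL v i} \<in> arcs (S2 H \<alpha>)"
  unfolding S2_arcs by blast+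

lemma S2_new_arc_cases:
  assumes "r \<in> S2_new_arcs H"
  obtains (subdivided) e where "r = SE e ` ends H e" "e \<in> arcs H" "card (ends H e) = 2"
    | (loop) e where "r = {SLp e 1, SLp e 2}" "e \<in> arcs H" "card (ends H e) = 1"
  using assms unfolding S2_new_arcs_def by blast

lemma S2_new_arcs_disjoint:
  assumes "r \<in> S2_new_arcs H" "r' \<in> S2_new_arcs H" "w \<in> r" "w \<in> r'"
  shows "r = r'"
  using assms by (elim S2_new_arc_cases) auto

lemma S2_new_arc_card: "r \<in> S2_new_arcs H \<Longrightarrow> card r = 2"
  by (elim S2_new_arc_cases) (auto simp: card_image inj_on_def)

lemma S2_new_arc_subset: "r \<in> S2_new_arcs H \<Longrightarrow> r \<subseteq> S2_new_verts H"
  by (elim S2_new_arc_cases) (auto simp: S2_new_verts_def)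

lemma S2_new_verts_covered: "w \<in> S2_new_verts H \<Longrightarrow> \<exists>r\<in>S2_new_arcs H. w \<in> r"
  unfolding S2_new_verts_def S2_new_arcs_def by blast

lemma S2_arc_within_new_verts:
  assumes "{u, w} \<in> arcs (S2 H \<alpha>)" "u \<in> S2_new_verts H" "w \<in> S2_new_verts H"
  shows "{u, w} \<in> S2_new_arcs H"
  using assms unfolding S2_arcs by (auto simp: S2_new_verts_def doubleton_eq_iff)

lemma S2_new_arc_unique:
  assumes "{u, w} \<in> arcs (S2 H \<alpha>)" "u \<in> S2_new_verts H" "r \<in> S2_new_arcs H" "w \<in> r"
  shows "r = {u, w}"
proof -
  have "w \<in> S2_new_verts H" using assms(3,4) S2_new_arc_subset by blast
  then have "{u, w} \<in> S2_new_arcs H" by (rule S2_arc_within_new_verts[OF assms(1,2)])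
  then show ?thesis using assms(3,4) S2_new_arcs_disjoint by blast
qed

lemma S2_has_perfect_matching_new_verts: "has_perfect_matching_on (S2 H \<alpha>) (S2_new_verts H)"
  unfolding has_perfect_matching_on_def S2_ends id_apply
proof (intro exI[of _ "S2_new_arcs H"] conjI ballI impI)
  show "S2_new_arcs H \<subseteq> arcs (S2 H \<alpha>)" unfolding S2_arcs by blast
  show "card r = 2" "r \<subseteq> S2_new_verts H" if "r \<in> S2_new_arcs H" for r
    using that by (simp_all add: S2_new_arc_card S2_new_arc_subset)
  show "r \<inter> r' = {}" if "r \<in> S2_new_arcs H" "r' \<in> S2_new_arcs H" "r \<noteq> r'" for r r'
    using that S2_new_arcs_disjoint by blast
  show "\<exists>r\<in>S2_new_arcs H. w \<in> r" if "w \<in> S2_new_verts H" for w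
    using that by (rule S2_new_verts_covered)
qed

lemma S2_neighbour_SL:
  assumes "{e\<in>arcs H. l \<in> ends H e} = {f}" "{u, SL l i} \<in> arcs (S2 H \<alpha>)"
  shows "u = SE f l"
  using assms(2) unfolding S2_arcs
proof (elim UnE)
  assume "{u, SL l i} \<in> S2_new_arcs H"
  then show ?thesis by (auto dest!: S2_new_arc_subset simp: S2_new_verts_def)
qed (use assms(1) in \<open>auto simp: doubleton_eq_iff\<close>)

lemma S2_old_neighbour_SE:
  assumes "{u, SE e v} \<in> arcs (S2 H \<alpha>)" "u \<in> S2_old_verts H \<alpha>"
  shows "(v \<notin> leaves H \<and> u = SV v) \<or> (v \<in> leaves H \<and> (\<exists>i. 1 \<le> i \<and> i \<le> \<alpha> v \<and> u = SL v i))"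
  using assms(1) unfolding S2_arcs
proof (elim UnE)
  assume "{u, SE e v} \<in> S2_new_arcs H"
  then show ?thesis using assms(2) S2_new_arc_subset S2_old_new_verts_disjoint by blast
qed (auto simp: doubleton_eq_iff)

lemma S2_old_neighbour_SLp:
  assumes "{u, SLp e i} \<in> arcs (S2 H \<alpha>)" "u \<in> S2_old_verts H \<alpha>" "ends H e = {v}"
  shows "u = SV v"
  using assms(1) unfolding S2_arcs
proof (elim UnE)
  assume "{u, SLp e i} \<in> S2_new_arcs H"
  then show ?thesis using assms(2) S2_new_arc_subset S2_old_new_verts_disjoint by blast
qed (use assms(3) in \<open>auto simp: doubleton_eq_iff\<close>)

lemma S2_old_verts_dominating:
  assumes wf: "wf_graph H" and \<alpha>: "\<forall>v\<in>leaves H. 1 \<le> \<alpha> v"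
  shows "dominating (S2 H \<alpha>) (S2_old_verts H \<alpha>)"
  unfolding dominating_def
proof (intro conjI ballI)
  show "S2_old_verts H \<alpha> \<subseteq> verts (S2 H \<alpha>)" by (simp add: S2_verts)
  have adj: "adj (S2 H \<alpha>) u w \<longleftrightarrow> u \<noteq> w \<and> {u, w} \<in> arcs (S2 H \<alpha>)" for u w
    by (simp add: adj_if_ends_id S2_ends)
  fix w assume "w \<in> verts (S2 H \<alpha>) - S2_old_verts H \<alpha>"
  then consider
      (subdivided) e v where "w = SE e v" "e \<in> arcs H" "card (ends H e) = 2" "v \<in> ends H e"
    | (loop) e i where "w = SLp e i" "e \<in> arcs H" "card (ends H e) = 1" "i = 1 \<or> i = 2"
    unfolding S2_verts S2_new_verts_def by blast
  then show "\<exists>u\<in>S2_old_verts H \<alpha>. adj (S2 H \<alpha>) u w"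
  proof cases
    case subdivided
    show ?thesis
    proof (cases "v \<in> leaves H")
      case True
      then have "{SE e v, SL v 1} \<in> arcs (S2 H \<alpha>)" "SL v 1 \<in> S2_old_verts H \<alpha>"
        using \<alpha> subdivided by (auto intro: S2_arcsI simp: S2_old_verts_def)
      then show ?thesis using subdivided by (auto simp: adj insert_commute)
    next
      case False
      moreover have "v \<in> verts H" using wf subdivided by (auto simp: wf_graph_def)
      ultimately have "{SV v, SE e v} \<in> arcs (S2 H \<alpha>)" "SV v \<in> S2_old_verts H \<alpha>"
        using subdivided by (auto intro: S2_arcsI simp: S2_old_verts_def)
      then show ?thesis using subdivided by (auto simp: adj)
    qed
  next
    case loop
    then obtain v where e: "ends H e = {v}" by (meson card_1_singletonE)
    have "v \<in> verts H" using wf loop e by (auto simp: wf_graph_def)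
    moreover have "v \<notin> leaves H" using leaf_no_loop[OF wf _ loop(2)] e by blast
    ultimately have "{SV v, SLp e i} \<in> arcs (S2 H \<alpha>)" "SV v \<in> S2_old_verts H \<alpha>"
      using loop e by (auto intro: S2_arcsI simp: S2_old_verts_def)
    then show ?thesis using loop by (auto simp: adj)
  qed
qed

lemma S2_new_verts_dominating:
  assumes c: "corona_graph H"
  shows "dominating (S2 H \<alpha>) (S2_new_verts H)"
  unfolding dominating_def
proof (intro conjI ballI)
  show "S2_new_verts H \<subseteq> verts (S2 H \<alpha>)" by (simp add: S2_verts)
  have wf: "wf_graph H" using c by (simp add: corona_graph_def)
  have adj: "adj (S2 H \<alpha>) u w \<longleftrightarrow> u \<noteq> w \<and> {u, w} \<in> arcs (S2 H \<alpha>)" for u w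
    by (simp add: adj_if_ends_id S2_ends)
  fix w assume "w \<in> verts (S2 H \<alpha>) - S2_new_verts H"
  then consider
      (vertex) x where "w = SV x" "x \<in> verts H" "x \<notin> leaves H"
    | (copy) l i where "w = SL l i" "l \<in> leaves H" "1 \<le> i" "i \<le> \<alpha> l"
    unfolding S2_verts S2_old_verts_def by blast
  then show "\<exists>u\<in>S2_new_verts H. adj (S2 H \<alpha>) u w"
  proof cases
    case vertex
    then obtain l f where f: "f \<in> arcs H" "ends H f = {x, l}" "x \<noteq> l"
      using corona_graph_leaf_neighbour[OF c] by metis
    then have f2: "card (ends H f) = 2" "x \<in> ends H f" by auto
    then have "{SV x, SE f x} \<in> arcs (S2 H \<alpha>)"
      using vertex f f2 by (intro S2_arcsI(1))
    moreover have "SE f x \<in> S2_new_verts H" using f(1) f2 by (auto simp: S2_new_verts_def)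
    ultimately show ?thesis using vertex by (auto simp: adj insert_commute)
  next
    case copy
    then obtain f x where "{e\<in>arcs H. l \<in> ends H e} = {f}" "ends H f = {x, l}" "x \<noteq> l"
      using leaf_incident_arc[OF wf] by metis
    then have f: "f \<in> arcs H" "l \<in> ends H f" "card (ends H f) = 2" by auto
    then have "{SE f l, SL l i} \<in> arcs (S2 H \<alpha>)"
      using copy by (intro S2_arcsI(3))
    moreover have "SE f l \<in> S2_new_verts H" using f by (auto simp: S2_new_verts_def)
    ultimately show ?thesis using copy by (auto simp: adj)
  qed
qed

lemma S2_dpdp_partition:
  assumes c: "corona_graph H" and \<alpha>: "\<forall>v\<in>leaves H. 1 \<le> \<alpha> v"
  shows "dpdp_partition (S2 H \<alpha>) (S2_old_verts H \<alpha>) (S2_new_verts H)"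
proof -
  have wf: "wf_graph H" using c by (simp add: corona_graph_def)
  show ?thesis
    unfolding dpdp_partition_def paired_dominating_def
    using S2_old_verts_dominating[OF wf \<alpha>] S2_new_verts_dominating[OF c]
    by (simp add: S2_verts S2_old_new_verts_disjoint S2_has_perfect_matching_new_verts)
qed

section \<open>Partitions of spanning subgraphs of the 2-subdivision graph\<close>

lemma adj_S2_subgraph: "adj (S2 H \<alpha>\<lparr>arcs := E'\<rparr>) u w \<longleftrightarrow> u \<noteq> w \<and> {u, w} \<in> E'"
  by (simp add: adj_if_ends_id S2_ends)

lemma S2_subgraph_new_arc:
  assumes E': "E' \<subseteq> arcs (S2 H \<alpha>)" and part: "dpdp_partition (S2 H \<alpha>\<lparr>arcs := E'\<rparr>) D P"
    and r: "r \<in> S2_new_arcs H" "w \<in> r"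
    and old_in_D: "\<And>u. {u, w} \<in> arcs (S2 H \<alpha>) \<Longrightarrow> u \<in> S2_old_verts H \<alpha> \<Longrightarrow> u \<in> D"
  shows "r \<in> E'" "r - {w} \<subseteq> P"
proof -
  have "w \<in> verts (S2 H \<alpha>\<lparr>arcs := E'\<rparr>)" using r S2_new_arc_subset by (auto simp: S2_verts)
  then obtain u where u: "u \<in> P" "u \<noteq> w" "{u, w} \<in> E'"
    using dpdp_partition_P_neighbour[OF part] by (auto simp: adj_S2_subgraph)
  have "u \<notin> S2_old_verts H \<alpha>" using u old_in_D E' part by (auto simp: dpdp_partition_def)
  moreover have "u \<in> verts (S2 H \<alpha>)" using u part by (auto simp: dpdp_partition_def)
  ultimately have "u \<in> S2_new_verts H" by (simp add: S2_verts)
  then have "r = {u, w}" using u E' r by (intro S2_new_arc_unique) auto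
  then show "r \<in> E'" "r - {w} \<subseteq> P" using u by auto
qed

lemma S2_subgraph_partition_leaf_copy:
  assumes part: "dpdp_partition (S2 H \<alpha>\<lparr>arcs := E'\<rparr>) D P" and E': "E' \<subseteq> arcs (S2 H \<alpha>)"
    and l: "l \<in> leaves H" "1 \<le> i" "i \<le> \<alpha> l" and f: "{e\<in>arcs H. l \<in> ends H e} = {f}"
  shows "SL l i \<in> D" "SE f l \<in> P"
proof -
  have "SL l i \<in> verts (S2 H \<alpha>\<lparr>arcs := E'\<rparr>)" using l by (simp add: S2_verts S2_old_verts_def)
  moreover have "u = SE f l" if "adj (S2 H \<alpha>\<lparr>arcs := E'\<rparr>) u (SL l i)" for u
    using that E' S2_neighbour_SL[OF f] by (auto simp: adj_S2_subgraph)
  ultimately show "SL l i \<in> D" "SE f l \<in> P" using dpdp_partition_pendant[OF part] by blast+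
qed

lemma S2_subgraph_D_neighbour_old:
  assumes part: "dpdp_partition (S2 H \<alpha>\<lparr>arcs := E'\<rparr>) D P"
    and r: "r \<in> S2_new_arcs H" "r \<subseteq> P" "w \<in> r"
    and u: "u \<in> D" "{u, w} \<in> arcs (S2 H \<alpha>)"
  shows "u \<in> S2_old_verts H \<alpha>"
proof (rule ccontr)
  assume "u \<notin> S2_old_verts H \<alpha>"
  then have "u \<in> S2_new_verts H" using u(1) part by (auto simp: S2_verts dpdp_partition_def)
  then have "u \<in> r" using S2_new_arc_unique[OF u(2) _ r(1,3)] by blast
  then show False using u(1) r(2) part by (auto simp: dpdp_partition_def)
qed

lemma S2_subgraph_partition_leaf_neighbour:
  assumes wf: "wf_graph H" and \<alpha>: "\<forall>v\<in>leaves H. 1 \<le> \<alpha> v" and E': "E' \<subseteq> arcs (S2 H \<alpha>)"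
    and part: "dpdp_partition (S2 H \<alpha>\<lparr>arcs := E'\<rparr>) D P"
    and l: "l \<in> leaves H" and f: "f \<in> arcs H" "ends H f = {x, l}" "x \<noteq> l" and x: "x \<notin> leaves H"
  shows "SV x \<in> D"
proof -
  obtain f' where "{e\<in>arcs H. l \<in> ends H e} = {f'}" using leaf_incident_arc[OF wf l] by metis
  then have incident: "{e\<in>arcs H. l \<in> ends H e} = {f}" using f by auto
  note copy = S2_subgraph_partition_leaf_copy[OF part E' l _ _ incident]
  have "card (ends H f) = 2" using f by simp
  then have r: "SE f ` ends H f \<in> S2_new_arcs H" "SE f l \<in> SE f ` ends H f"
    using f unfolding S2_new_arcs_def by blast+
  have "u \<in> D" if "{u, SE f l} \<in> arcs (S2 H \<alpha>)" "u \<in> S2_old_verts H \<alpha>" for u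
    using S2_old_neighbour_SE[OF that] copy(1) l by blast
  then have "SE f ` ends H f - {SE f l} \<subseteq> P" by (rule S2_subgraph_new_arc(2)[OF E' part r])
  moreover have "SE f l \<in> P" using copy(2)[of 1] l \<alpha> by blast
  ultimately have r_P: "SE f ` ends H f \<subseteq> P" by blast
  have "SE f x \<in> SE f ` ends H f" using f by simp
  then obtain u where u: "u \<in> D" "u \<noteq> SE f x" "{u, SE f x} \<in> E'"
    using r_P dpdp_partition_D_neighbour[OF part] by (force simp: adj_S2_subgraph)
  then have "u \<in> S2_old_verts H \<alpha>"
    using S2_subgraph_D_neighbour_old[OF part r(1) r_P \<open>SE f x \<in> SE f ` ends H f\<close>] E' by blast
  then have "u = SV x" using S2_old_neighbour_SE[of u f x H \<alpha>] u(3) E' x by blast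
  then show ?thesis using u(1) by simp
qed

lemma S2_subgraph_partition_old_verts:
  assumes c: "corona_graph H" and \<alpha>: "\<forall>v\<in>leaves H. 1 \<le> \<alpha> v" and E': "E' \<subseteq> arcs (S2 H \<alpha>)"
    and part: "dpdp_partition (S2 H \<alpha>\<lparr>arcs := E'\<rparr>) D P"
  shows "S2_old_verts H \<alpha> \<subseteq> D"
proof -
  have wf: "wf_graph H" using c by (simp add: corona_graph_def)
  have "SV x \<in> D" if "x \<in> verts H" "x \<notin> leaves H" for x
    using corona_graph_leaf_neighbour[OF c that] S2_subgraph_partition_leaf_neighbour[OF wf \<alpha> E' part] that
    by metis
  moreover have "SL l i \<in> D" if "l \<in> leaves H" "1 \<le> i" "i \<le> \<alpha> l" for l i
    using leaf_incident_arc[OF wf \<open>l \<in> leaves H\<close>] S2_subgraph_partition_leaf_copy(1)[OF part E' that]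
    by metis
  ultimately show ?thesis unfolding S2_old_verts_def by blast
qed

lemma S2_subgraph_partition_eq:
  assumes "corona_graph H" "\<forall>v\<in>leaves H. 1 \<le> \<alpha> v" and E': "E' \<subseteq> arcs (S2 H \<alpha>)"
    and part: "dpdp_partition (S2 H \<alpha>\<lparr>arcs := E'\<rparr>) D P"
  shows "D = S2_old_verts H \<alpha>" "P = S2_new_verts H"
proof -
  have old_D: "S2_old_verts H \<alpha> \<subseteq> D" using S2_subgraph_partition_old_verts[OF assms] .
  have "w \<in> P" if w: "w \<in> S2_new_verts H" for w
  proof -
    obtain r where r: "r \<in> S2_new_arcs H" "w \<in> r" using S2_new_verts_covered[OF w] by blast
    then obtain w' where "r = {w', w}" "w' \<noteq> w" using S2_new_arc_card card_2_obtain_other by metis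
    then have "w' \<in> r" "w \<in> r - {w'}" by auto
    then show ?thesis using S2_subgraph_new_arc(2)[OF E' part r(1)] old_D by blast
  qed
  moreover have "D \<inter> P = {}" "S2_old_verts H \<alpha> \<union> S2_new_verts H = D \<union> P"
    using part by (simp_all add: dpdp_partition_def S2_verts)
  ultimately show "D = S2_old_verts H \<alpha>" "P = S2_new_verts H"
    using old_D S2_old_new_verts_disjoint[of H \<alpha>] by blast+
qed

lemma S2_subgraph_partition_arcs:
  assumes c: "corona_graph H" and "\<forall>v\<in>leaves H. 1 \<le> \<alpha> v" and E': "E' \<subseteq> arcs (S2 H \<alpha>)"
    and part: "dpdp_partition (S2 H \<alpha>\<lparr>arcs := E'\<rparr>) D P"
  shows "arcs (S2 H \<alpha>) \<subseteq> E'"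
proof
  fix r assume r: "r \<in> arcs (S2 H \<alpha>)"
  have wf: "wf_graph H" using c by (simp add: corona_graph_def)
  note D = S2_subgraph_partition_eq(1)[OF assms] and P = S2_subgraph_partition_eq(2)[OF assms]
  from r consider (new) "r \<in> S2_new_arcs H"
    | (vertex_subdivided) v e where "r = {SV v, SE e v}" "v \<notin> leaves H"
        "e \<in> arcs H" "card (ends H e) = 2" "v \<in> ends H e"
    | (vertex_loop) v e i where "r = {SV v, SLp e i}" "ends H e = {v}" "e \<in> arcs H" "i = 1 \<or> i = 2"
    | (copy) v e i where "r = {SE e v, SL v i}" "v \<in> leaves H" "e \<in> arcs H" "v \<in> ends H e"
        "1 \<le> i" "i \<le> \<alpha> v"
    unfolding S2_arcs by blast
  then show "r \<in> E'"
  proof cases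
    case new
    then obtain w where "w \<in> r" using S2_new_arc_card by fastforce
    then show ?thesis using S2_subgraph_new_arc(1)[OF E' part new] D by blast
  next
    case vertex_subdivided
    then have "SE e v \<in> P" unfolding P S2_new_verts_def by blast
    then obtain u where u: "u \<in> D" "u \<noteq> SE e v" "{u, SE e v} \<in> E'"
      using dpdp_partition_D_neighbour[OF part] by (auto simp: adj_S2_subgraph)
    then have "u = SV v" using S2_old_neighbour_SE[of u e v H \<alpha>] E' D vertex_subdivided by blast
    then show ?thesis using u vertex_subdivided by simp
  next
    case vertex_loop
    then have "SLp e i \<in> P" unfolding P S2_new_verts_def by auto
    then obtain u where u: "u \<in> D" "u \<noteq> SLp e i" "{u, SLp e i} \<in> E'"
      using dpdp_partition_D_neighbour[OF part] by (auto simp: adj_S2_subgraph)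
    then have "u = SV v" using S2_old_neighbour_SLp[of u e i H \<alpha>] E' D vertex_loop by blast
    then show ?thesis using u vertex_loop by simp
  next
    case copy
    obtain f where f: "{e\<in>arcs H. v \<in> ends H e} = {f}" using leaf_incident_arc[OF wf copy(2)] by metis
    have "SL v i \<in> verts (S2 H \<alpha>\<lparr>arcs := E'\<rparr>)" using copy by (auto simp: S2_verts S2_old_verts_def)
    then obtain u where u: "u \<noteq> SL v i" "{u, SL v i} \<in> E'"
      using dpdp_partition_P_neighbour[OF part] by (auto simp: adj_S2_subgraph)
    moreover have "e = f" using f copy by blast
    ultimately have "u = SE e v" using S2_neighbour_SL[OF f, of u i \<alpha>] E' by blast
    then show ?thesis using u copy by simp
  qed
qed

lemma S2_minimal_dpdp_graph:
  assumes "corona_graph H" "\<forall>v\<in>leaves H. 1 \<le> \<alpha> v"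
  shows "minimal_dpdp_graph (S2 H \<alpha>)"
  unfolding minimal_dpdp_graph_def dpdp_graph_iff_partition
proof (intro conjI allI impI notI)
  show "\<exists>D P. dpdp_partition (S2 H \<alpha>) D P" using S2_dpdp_partition[OF assms] by blast
next
  fix E' assume E': "E' \<subset> arcs (S2 H \<alpha>)" and "\<exists>D P. dpdp_partition (S2 H \<alpha>\<lparr>arcs := E'\<rparr>) D P"
  then obtain D P where "dpdp_partition (S2 H \<alpha>\<lparr>arcs := E'\<rparr>) D P" by blast
  with E' show False using S2_subgraph_partition_arcs[OF assms, of E'] by blast
qed

section \<open>The corona \<open>F \<circ> K\<^sub>1\<close>\<close>

lemma wf_graph_corona_K1:
  assumes "wf_graph F"
  shows "wf_graph (corona_K1 F)"
proof -
  have "ends (corona_K1 F) x \<subseteq> verts (corona_K1 F) \<and>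
      (card (ends (corona_K1 F) x) = 1 \<or> card (ends (corona_K1 F) x) = 2)"
    if "x \<in> arcs (corona_K1 F)" for x
  proof (cases x)
    case (Inl e)
    then have "e \<in> arcs F" using that by (auto simp: corona_K1_def)
    moreover have "card (Inl ` ends F e :: ('a + 'a) set) = card (ends F e)" by (simp add: card_image)
    ultimately show ?thesis using assms Inl by (auto simp: corona_K1_def wf_graph_def)
  next
    case (Inr v)
    then show ?thesis using that by (auto simp: corona_K1_def)
  qed
  then show ?thesis using assms by (simp add: wf_graph_def corona_K1_def)
qed

lemma corona_graph_corona_K1:
  assumes wf: "wf_graph F"
  shows "corona_graph (corona_K1 F)"
proof -
  let ?K = "corona_K1 F"
  have pendant: "verts ?K - Inl ` verts F = Inr ` verts F" by (auto simp: corona_K1_def)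
  have adj: "adj ?K (Inl w) (Inr w)" if "w \<in> verts F" for w
    unfolding adj_def using that by (intro conjI bexI[of _ "Inr w"]) (auto simp: corona_K1_def)
  have degree: "degree ?K (Inr w) = 1" if "w \<in> verts F" for w
  proof -
    have pendant_arc: "{e\<in>arcs ?K. Inr w \<in> ends ?K e \<and> card (ends ?K e) = 2} = {Inr w}"
    proof (rule set_eqI)
      fix e
      show "e \<in> {e\<in>arcs ?K. Inr w \<in> ends ?K e \<and> card (ends ?K e) = 2} \<longleftrightarrow> e \<in> {Inr w}"
        using that by (cases e) (auto simp: corona_K1_def)
    qed
    have "ends ?K e \<noteq> {Inr w}" for e by (cases e) (auto simp: corona_K1_def)
    then have no_loop: "{e\<in>arcs ?K. ends ?K e = {Inr w}} = {}" by blast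
    show ?thesis unfolding degree_def pendant_arc no_loop by simp
  qed
  show ?thesis
    unfolding corona_graph_def pendant
    using wf_graph_corona_K1[OF wf] adj degree by (auto simp: corona_K1_def)
qed

theorem corollary6p3:
  fixes H :: "('v,'e) mgraph" and \<alpha> :: "'v \<Rightarrow> nat"
  shows "(corona_graph H \<and> (\<forall>v\<in>leaves H. 1 \<le> \<alpha> v) \<longrightarrow> minimal_dpdp_graph (S2 H \<alpha>))
       \<and> (\<forall>(F :: ('a,'b) mgraph) (\<beta> :: 'a + 'a \<Rightarrow> nat).
            wf_graph F \<and> (\<forall>v\<in>leaves (corona_K1 F). 1 \<le> \<beta> v)
            \<longrightarrow> minimal_dpdp_graph (S2 (corona_K1 F) \<beta>))"
  by (auto intro: S2_minimal_dpdp_graph corona_graph_corona_K1)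

end
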